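(* An iterated graph system satisfies conditions (GR1) and (GR2) if and only if its replacement graphs have uniformly bounded degree, i.e. \[ \sup_{w\in W_\#}\deg(w)<\infty, \] where $\deg(w)$ denotes the degree of $w$ in the replacement graph $G_{|w|}$.
   Context: A graph is a pair $(V,E)$ with $V$ finite non-empty and $E\subseteq V\times V$ such that $(x,y)\in E$ implies $(y,x)\notin E$; write $\{x,y\}\in E$ if $(x,y)\in E$ or $(y,x)\in E$. The degree of $x$ is the number of $y$ with $\{x,y\}\in E$. An iterated graph system (IGS) consists of a connected graph $G_1=(S,E)$, a finite set $\mathcal T$ of types, a surjective typing function $\mathfrak t:E\to\mathcal T$, and for each $t\in\mathcal T$ a non-empty set $I_t\subseteq S\times S$ (gluing rules). Let $W_m=S^m$ (words $w=w_1\cdots w_m$), $W_\#=\bigcup_{m\ge1}W_m$, $|w|$ the length of $w$, and $[w]_k=w_1\cdots w_k$. The replacement graphs $G_m=(W_m,E_m)$ with typings $\mathfrak t_m:E_m\to\mathcal T$ are defined recursively: $G_1$ and $\mathfrak t_1=\mathfrak t$ are given; for $w,v\in W_{m+1}$, $(w,v)\in E_{m+1}$ iff either (1) $[w]_m=[v]_m$ and $(w_{m+1},v_{m+1})\in E$, in which case $\mathfrak t_{m+1}(w,v)=\mathfrak t(w_{m+1},v_{m+1})$; or (2) $([w]_m,[v]_m)\in E_m$ and $(w_{m+1},v_{m+1})\in I_{\mathfrak t_m([w]_m,[v]_m)}$, in which case $\mathfrak t_{m+1}(w,v)=\mathfrak t_m([w]_m,[v]_m)$. For $t\in\mathcal T$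 and $w\in S$ let $\mathfrak b_t^+(w)=|\{v\in S:(w,v)\in I_t\}|$, $\mathfrak b_t^-(w)=|\{v\in S:(v,w)\in I_t\}|$, $\deg_t^+(w)=|\{v:(w,v)\in E,\ \mathfrak t(w,v)=t\}|$ and $\deg_t^-(w)=|\{v:(v,w)\in E,\ \mathfrak t(v,w)=t\}|$. Condition (GR1): $\mathfrak b_t^\star(w)\in\{0,1\}$ for all $t\in\mathcal T$, $\star\in\{+,-\}$, $w\in S$. Condition (GR2): for all $t\in\mathcal T$, $\star\in\{+,-\}$, $w\in S$, the numbers $\mathfrak b_t^\star(w)$ and $\deg_t^\star(w)$ are never simultaneously non-zero. *)

theory Defs
  imports Main
begin

definition IGS :: "'a set \<Rightarrow> ('a \<times> 'a) set \<Rightarrow> 'b set \<Rightarrow> ('a \<times> 'a \<Rightarrow> 'b) \<Rightarrow> ('b \<Rightarrow> ('a \<times> 'a) set) \<Rightarrow> bool" where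
  "IGS S E T tp I \<longleftrightarrow>
     finite S \<and> S \<noteq> {} \<and> E \<subseteq> S \<times> S \<and>
     (\<forall>x y. (x, y) \<in> E \<longrightarrow> (y, x) \<notin> E) \<and>
     (\<forall>x\<in>S. \<forall>y\<in>S. (x, y) \<in> (E \<union> E\<inverse>)\<^sup>*) \<and>
     finite T \<and> tp ` E = T \<and>
     (\<forall>t\<in>T. I t \<subseteq> S \<times> S \<and> I t \<noteq> {})"

definition words :: "'a set \<Rightarrow> nat \<Rightarrow> 'a list set" where
  "words S m = {w. length w = m \<and> set w \<subseteq> S}"

text \<open>Typing of edges of G_m; only meaningful on edges of G_m.
 Cases (1) and (2) are exclusive since E is irreflexive.\<close>
fun rep_typ :: "('a \<times> 'a \<Rightarrow> 'b) \<Rightarrow> nat \<Rightarrow> 'a list \<Rightarrow> 'a list \<Rightarrow> 'b" where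
  "rep_typ tp 0 w v = tp (hd w, hd v)"
| "rep_typ tp (Suc 0) w v = tp (hd w, hd v)"
| "rep_typ tp (Suc (Suc m)) w v =
     (if butlast w = butlast v then tp (last w, last v)
      else rep_typ tp (Suc m) (butlast w) (butlast v))"

fun rep_edges :: "'a set \<Rightarrow> ('a \<times> 'a) set \<Rightarrow> ('a \<times> 'a \<Rightarrow> 'b) \<Rightarrow> ('b \<Rightarrow> ('a \<times> 'a) set)
                   \<Rightarrow> nat \<Rightarrow> ('a list \<times> 'a list) set" where
  "rep_edges S E tp I 0 = {}"
| "rep_edges S E tp I (Suc 0) = {([x], [y]) | x y. (x, y) \<in> E}"
| "rep_edges S E tp I (Suc (Suc m)) =
     {(w, v). w \<in> words S (Suc (Suc m)) \<and> v \<in> words S (Suc (Suc m)) \<and>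
        ((butlast w = butlast v \<and> (last w, last v) \<in> E) \<or>
         ((butlast w, butlast v) \<in> rep_edges S E tp I (Suc m) \<and>
          (last w, last v) \<in> I (rep_typ tp (Suc m) (butlast w) (butlast v))))}"

definition rep_deg :: "'a set \<Rightarrow> ('a \<times> 'a) set \<Rightarrow> ('a \<times> 'a \<Rightarrow> 'b) \<Rightarrow> ('b \<Rightarrow> ('a \<times> 'a) set)
                   \<Rightarrow> 'a list \<Rightarrow> nat" where
  "rep_deg S E tp I w = card {v. (w, v) \<in> rep_edges S E tp I (length w) \<or>
                                (v, w) \<in> rep_edges S E tp I (length w)}"

definition b_plus :: "'a set \<Rightarrow> ('b \<Rightarrow> ('a \<times> 'a) set) \<Rightarrow> 'b \<Rightarrow> 'a \<Rightarrow> nat" where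
  "b_plus S I t w = card {v\<in>S. (w, v) \<in> I t}"
definition b_minus :: "'a set \<Rightarrow> ('b \<Rightarrow> ('a \<times> 'a) set) \<Rightarrow> 'b \<Rightarrow> 'a \<Rightarrow> nat" where
  "b_minus S I t w = card {v\<in>S. (v, w) \<in> I t}"
definition deg_plus :: "('a \<times> 'a) set \<Rightarrow> ('a \<times> 'a \<Rightarrow> 'b) \<Rightarrow> 'b \<Rightarrow> 'a \<Rightarrow> nat" where
  "deg_plus E tp t w = card {v. (w, v) \<in> E \<and> tp (w, v) = t}"
definition deg_minus :: "('a \<times> 'a) set \<Rightarrow> ('a \<times> 'a \<Rightarrow> 'b) \<Rightarrow> 'b \<Rightarrow> 'a \<Rightarrow> nat" where
  "deg_minus E tp t w = card {v. (v, w) \<in> E \<and> tp (v, w) = t}"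

definition GR1 :: "'a set \<Rightarrow> 'b set \<Rightarrow> ('b \<Rightarrow> ('a \<times> 'a) set) \<Rightarrow> bool" where
  "GR1 S T I \<longleftrightarrow> (\<forall>t\<in>T. \<forall>w\<in>S. b_plus S I t w \<in> {0, 1} \<and> b_minus S I t w \<in> {0, 1})"

definition GR2 :: "'a set \<Rightarrow> ('a \<times> 'a) set \<Rightarrow> 'b set \<Rightarrow> ('a \<times> 'a \<Rightarrow> 'b) \<Rightarrow> ('b \<Rightarrow> ('a \<times> 'a) set) \<Rightarrow> bool" where
  "GR2 S E T tp I \<longleftrightarrow> (\<forall>t\<in>T. \<forall>w\<in>S.
      \<not> (b_plus S I t w \<noteq> 0 \<and> deg_plus E tp t w \<noteq> 0) \<and>
      \<not> (b_minus S I t w \<noteq> 0 \<and> deg_minus E tp t w \<noteq> 0))"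

end

theory Submission
  imports Defs
begin

text \<open>
  Let \<open>N\<^sub>m(w, t)\<close> be the number of out-neighbours of \<open>w\<close> in \<open>G\<^sub>m\<close> joined by an edge of type \<open>t\<close>.
  The definition of \<open>E\<^sub>m\<^sub>+\<^sub>1\<close> gives the exact recursion
  \<open>N\<^sub>m\<^sub>+\<^sub>1(u a, t) = deg\<^sup>+\<^sub>t(a) + N\<^sub>m(u, t) \<cdot> b\<^sup>+\<^sub>t(a)\<close>, starting from \<open>N\<^sub>1(a, t) = deg\<^sup>+\<^sub>t(a)\<close>.
  If the "+" halves of (GR1) and (GR2) hold, every step either resets \<open>N\<close> to
  \<open>deg\<^sup>+\<^sub>t(a) \<le> |S|\<close> or leaves it unchanged, so out-degrees are at most \<open>|T| |S|\<close>.
  If they fail at \<open>(t, a)\<close>, then \<open>b\<^sup>+\<^sub>t(a) \<ge> 2\<close>, or \<open>b\<^sup>+\<^sub>t(a) \<ge> 1\<close> and \<open>deg\<^sup>+\<^sub>t(a) \<ge> 1\<close>, and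
  appending \<open>a\<close> again and again increases \<open>N\<close> by at least one each time.
  In-degrees are the out-degrees of the system with all edges and gluing rules reversed.
\<close>

lemma words_Suc_iff:
  "w \<in> words S (Suc m) \<longleftrightarrow> (\<exists>u a. w = u @ [a] \<and> u \<in> words S m \<and> a \<in> S)"
proof
  assume "w \<in> words S (Suc m)"
  then show "\<exists>u a. w = u @ [a] \<and> u \<in> words S m \<and> a \<in> S"
    by (cases w rule: rev_exhaust) (auto simp: words_def)
qed (auto simp: words_def)

lemma finite_words: "finite S \<Longrightarrow> finite (words S m)"
  using finite_lists_length_eq[of S m] by (simp add: words_def conj_commute)

lemma rep_typ_swap: "rep_typ (tp \<circ> prod.swap) m v w = rep_typ tp m w v"
  by (induction tp m w v rule: rep_typ.induct) auto

lemma rep_edges_converse: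
  "rep_edges S (E\<inverse>) (tp \<circ> prod.swap) (\<lambda>t. (I t)\<inverse>) m = (rep_edges S E tp I m)\<inverse>"
proof (induction S E tp I m rule: rep_edges.induct)
  case (3 S E tp I m)
  then show ?case
    by (simp only: rep_edges.simps rep_typ_swap) auto
qed auto

locale replacement_graphs =
  fixes S :: "'a set" and E :: "('a \<times> 'a) set"
    and tp :: "'a \<times> 'a \<Rightarrow> 'b" and I :: "'b \<Rightarrow> ('a \<times> 'a) set"
  assumes finite_S: "finite S"
    and E_subset: "E \<subseteq> S \<times> S"
    and E_irrefl: "(x, x) \<notin> E"
begin

lemma rep_edges_in_words:
  assumes "(w, v) \<in> rep_edges S E tp I m"
  shows "w \<in> words S m \<and> v \<in> words S m"
proof (cases m)
  case (Suc k)
  then show ?thesis using assms E_subset by (cases k) (auto simp: words_def)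
qed (use assms in simp)

lemma rep_edges_irrefl: "(w, w) \<notin> rep_edges S E tp I m"
proof (induction m arbitrary: w)
  case (Suc m)
  then show ?case using E_irrefl by (cases m) auto
qed simp

lemma rep_typ_in_types:
  "(w, v) \<in> rep_edges S E tp I m \<Longrightarrow> rep_typ tp m w v \<in> tp ` E"
proof (induction m arbitrary: w v)
  case (Suc m)
  show ?case
  proof (cases m)
    case (Suc k)
    then show ?thesis
      using Suc.prems Suc.IH rep_edges_irrefl[of "butlast v" "Suc k"] by auto
  qed (use Suc.prems in auto)
qed simp

definition out_nbrs :: "nat \<Rightarrow> 'a list \<Rightarrow> 'a list set" where
  "out_nbrs m w = {v. (w, v) \<in> rep_edges S E tp I m}"

definition typed_out_nbrs :: "nat \<Rightarrow> 'a list \<Rightarrow> 'b \<Rightarrow> 'a list set" where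
  "typed_out_nbrs m w t = {v \<in> out_nbrs m w. rep_typ tp m w v = t}"

lemma finite_out_nbrs: "finite (out_nbrs m w)"
  by (rule finite_subset[OF _ finite_words[OF finite_S, of m]])
    (auto simp: out_nbrs_def dest: rep_edges_in_words)

lemma finite_typed_out_nbrs: "finite (typed_out_nbrs m w t)"
  using finite_out_nbrs by (simp add: typed_out_nbrs_def)

lemma typed_out_nbrs_snoc:
  assumes "u \<in> words S (Suc m)" "a \<in> S"
  shows "typed_out_nbrs (Suc (Suc m)) (u @ [a]) t =
    (\<lambda>b. u @ [b]) ` {b. (a, b) \<in> E \<and> tp (a, b) = t} \<union>
    (\<lambda>(u', b). u' @ [b]) ` (typed_out_nbrs (Suc m) u t \<times> {b \<in> S. (a, b) \<in> I t})"
  (is "?L = ?A \<union> ?B")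
proof (intro set_eqI iffI)
  fix v assume "v \<in> ?L"
  then have edge: "(u @ [a], v) \<in> rep_edges S E tp I (Suc (Suc m))"
    and edge_type: "rep_typ tp (Suc (Suc m)) (u @ [a]) v = t"
    by (simp_all add: typed_out_nbrs_def out_nbrs_def)
  obtain u' b where "v = u' @ [b]" "u' \<in> words S (Suc m)" "b \<in> S"
    using rep_edges_in_words[OF edge] by (auto simp: words_Suc_iff)
  then show "v \<in> ?A \<union> ?B"
    using edge edge_type rep_edges_irrefl[of u "Suc m"]
    by (auto simp: typed_out_nbrs_def out_nbrs_def)
next
  fix v assume "v \<in> ?A \<union> ?B"
  then consider (edge) b where "v = u @ [b]" "(a, b) \<in> E" "tp (a, b) = t"
    | (glued) u' b where "v = u' @ [b]" "(u, u') \<in> rep_edges S E tp I (Suc m)"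
      "rep_typ tp (Suc m) u u' = t" "(a, b) \<in> I t" "b \<in> S"
    by (auto simp: typed_out_nbrs_def out_nbrs_def)
  then show "v \<in> ?L"
  proof cases
    case edge
    then show ?thesis using assms E_subset by (auto simp: typed_out_nbrs_def out_nbrs_def words_def)
  next
    case glued
    then have "u' \<noteq> u" "u' \<in> words S (Suc m)"
      using rep_edges_irrefl rep_edges_in_words[OF glued(2)] by auto
    then show ?thesis using glued assms by (auto simp: typed_out_nbrs_def out_nbrs_def words_def)
  qed
qed

lemma finite_E_successors: "finite {b. (a, b) \<in> E \<and> tp (a, b) = t}"
  by (rule finite_subset[OF _ finite_S]) (use E_subset in auto)

lemma deg_plus_le_card: "deg_plus E tp t a \<le> card S"
  unfolding deg_plus_def using E_subset by (intro card_mono[OF finite_S]) auto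

lemma card_typed_out_nbrs_single:
  "card (typed_out_nbrs (Suc 0) [a] t) = deg_plus E tp t a"
proof -
  have "typed_out_nbrs (Suc 0) [a] t = (\<lambda>b. [b]) ` {b. (a, b) \<in> E \<and> tp (a, b) = t}"
    by (auto simp: typed_out_nbrs_def out_nbrs_def)
  then show ?thesis by (simp add: card_image inj_on_def deg_plus_def)
qed

lemma card_typed_out_nbrs_snoc:
  assumes "u \<in> words S (Suc m)" "a \<in> S"
  shows "card (typed_out_nbrs (Suc (Suc m)) (u @ [a]) t) =
    deg_plus E tp t a + card (typed_out_nbrs (Suc m) u t) * b_plus S I t a"
proof -
  let ?A = "(\<lambda>b. u @ [b]) ` {b. (a, b) \<in> E \<and> tp (a, b) = t}"
  let ?P = "typed_out_nbrs (Suc m) u t \<times> {b \<in> S. (a, b) \<in> I t}"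
  let ?B = "(\<lambda>(u', b). u' @ [b]) ` ?P"
  have "u \<notin> typed_out_nbrs (Suc m) u t"
    using rep_edges_irrefl by (simp add: typed_out_nbrs_def out_nbrs_def)
  then have disjoint: "?A \<inter> ?B = {}" by auto
  have "card ?A = deg_plus E tp t a"
    by (simp add: card_image inj_on_def deg_plus_def)
  moreover have "card ?B = card (typed_out_nbrs (Suc m) u t) * b_plus S I t a"
    by (subst card_image) (auto simp: inj_on_def card_cartesian_product b_plus_def)
  ultimately show ?thesis
    using typed_out_nbrs_snoc[OF assms] card_Un_disjoint[OF _ _ disjoint]
      finite_E_successors finite_typed_out_nbrs finite_S by simp
qed

definition GR_plus :: "'b \<Rightarrow> 'a \<Rightarrow> bool" where
  "GR_plus t a \<longleftrightarrow> b_plus S I t a \<in> {0, 1} \<and> \<not> (b_plus S I t a \<noteq> 0 \<and> deg_plus E tp t a \<noteq> 0)"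

lemma card_typed_out_nbrs_le:
  assumes "\<forall>a\<in>S. GR_plus t a" "w \<in> words S (Suc m)"
  shows "card (typed_out_nbrs (Suc m) w t) \<le> card S"
  using assms(2)
proof (induction m arbitrary: w)
  case 0
  then obtain a where "w = [a]" by (auto simp: words_def length_Suc_conv)
  then show ?case using card_typed_out_nbrs_single deg_plus_le_card by simp
next
  case (Suc m)
  then obtain u a where w: "w = u @ [a]" "u \<in> words S (Suc m)" "a \<in> S"
    by (auto simp: words_Suc_iff)
  then have "b_plus S I t a = 0 \<or> b_plus S I t a = 1 \<and> deg_plus E tp t a = 0"
    using assms(1) by (auto simp: GR_plus_def)
  then show ?case
    using card_typed_out_nbrs_snoc[OF w(2,3)] Suc.IH[OF w(2)] deg_plus_le_card w(1) by auto
qed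

lemma card_typed_out_nbrs_unbounded:
  assumes "t \<in> tp ` E" "a \<in> S" "\<not> GR_plus t a"
  shows "\<exists>w\<in>words S (Suc k). Suc k \<le> card (typed_out_nbrs (Suc k) w t)"
proof (induction k)
  case 0
  obtain x y where xy: "(x, y) \<in> E" "t = tp (x, y)" using assms(1) by auto
  then have "deg_plus E tp t x \<noteq> 0"
    using finite_E_successors by (auto simp: deg_plus_def)
  moreover have "[x] \<in> words S (Suc 0)" using xy E_subset by (auto simp: words_def)
  ultimately show ?case using card_typed_out_nbrs_single by (auto intro!: bexI[of _ "[x]"])
next
  case (Suc k)
  then obtain w where w: "w \<in> words S (Suc k)" "Suc k \<le> card (typed_out_nbrs (Suc k) w t)"
    by blast
  let ?N = "card (typed_out_nbrs (Suc k) w t)"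
  have "2 \<le> b_plus S I t a \<or> 1 \<le> b_plus S I t a \<and> 1 \<le> deg_plus E tp t a"
    using assms(3) by (auto simp: GR_plus_def)
  then have "Suc ?N \<le> deg_plus E tp t a + ?N * b_plus S I t a"
  proof (elim disjE conjE)
    assume "2 \<le> b_plus S I t a"
    then have "?N * 2 \<le> ?N * b_plus S I t a" by (rule mult_le_mono2)
    then show ?thesis using w(2) by linarith
  next
    assume "1 \<le> b_plus S I t a" "1 \<le> deg_plus E tp t a"
    then show ?thesis using mult_le_mono2[of 1 "b_plus S I t a" ?N] by linarith
  qed
  then have "Suc (Suc k) \<le> card (typed_out_nbrs (Suc (Suc k)) (w @ [a]) t)"
    using card_typed_out_nbrs_snoc[OF w(1) assms(2)] w(2) by simp
  moreover have "w @ [a] \<in> words S (Suc (Suc k))" using w(1) assms(2) by (auto simp: words_Suc_iff)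
  ultimately show ?case by blast
qed

lemma out_nbrs_eq_UN_typed: "out_nbrs m w = (\<Union>t\<in>tp ` E. typed_out_nbrs m w t)"
  using rep_typ_in_types by (fastforce simp: typed_out_nbrs_def out_nbrs_def)

theorem GR_plus_iff_bounded_out_degree:
  "(\<forall>t\<in>tp ` E. \<forall>a\<in>S. GR_plus t a) \<longleftrightarrow> (\<exists>B. \<forall>m\<ge>1. \<forall>w\<in>words S m. card (out_nbrs m w) \<le> B)"
proof
  assume GR: "\<forall>t\<in>tp ` E. \<forall>a\<in>S. GR_plus t a"
  have "card (out_nbrs m w) \<le> card (tp ` E) * card S" if "m \<ge> 1" "w \<in> words S m" for m w
  proof -
    obtain k where k: "m = Suc k" using \<open>m \<ge> 1\<close> by (cases m) auto
    have "finite (tp ` E)" using finite_subset[OF E_subset] finite_S by blast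
    then have "card (out_nbrs m w) \<le> (\<Sum>t\<in>tp ` E. card (typed_out_nbrs m w t))"
      unfolding out_nbrs_eq_UN_typed by (rule card_UN_le)
    also have "\<dots> \<le> (\<Sum>t\<in>tp ` E. card S)"
      using card_typed_out_nbrs_le GR that(2) unfolding k by (intro sum_mono) blast
    finally show ?thesis by simp
  qed
  then show "\<exists>B. \<forall>m\<ge>1. \<forall>w\<in>words S m. card (out_nbrs m w) \<le> B" by blast
next
  assume "\<exists>B. \<forall>m\<ge>1. \<forall>w\<in>words S m. card (out_nbrs m w) \<le> B"
  then obtain B where B: "\<And>m w. m \<ge> 1 \<Longrightarrow> w \<in> words S m \<Longrightarrow> card (out_nbrs m w) \<le> B"
    by blast
  show "\<forall>t\<in>tp ` E. \<forall>a\<in>S. GR_plus t a"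
  proof (intro ballI, rule ccontr)
    fix t a assume "t \<in> tp ` E" "a \<in> S" "\<not> GR_plus t a"
    then obtain w where w: "w \<in> words S (Suc B)" "Suc B \<le> card (typed_out_nbrs (Suc B) w t)"
      using card_typed_out_nbrs_unbounded by blast
    have "card (typed_out_nbrs (Suc B) w t) \<le> card (out_nbrs (Suc B) w)"
      by (rule card_mono[OF finite_out_nbrs]) (auto simp: typed_out_nbrs_def)
    then show False using B[OF _ w(1)] w(2) by simp
  qed
qed

definition in_nbrs :: "nat \<Rightarrow> 'a list \<Rightarrow> 'a list set" where
  "in_nbrs m w = {v. (v, w) \<in> rep_edges S E tp I m}"

definition GR_minus :: "'b \<Rightarrow> 'a \<Rightarrow> bool" where
  "GR_minus t a \<longleftrightarrow> b_minus S I t a \<in> {0, 1} \<and> \<not> (b_minus S I t a \<noteq> 0 \<and> deg_minus E tp t a \<noteq> 0)"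

lemma GR1_GR2_iff:
  "GR1 S (tp ` E) I \<and> GR2 S E (tp ` E) tp I \<longleftrightarrow>
    (\<forall>t\<in>tp ` E. \<forall>a\<in>S. GR_plus t a) \<and> (\<forall>t\<in>tp ` E. \<forall>a\<in>S. GR_minus t a)"
  unfolding GR1_def GR2_def GR_plus_def GR_minus_def by (auto simp only: ball_conj_distrib)

lemma replacement_graphs_converse: "replacement_graphs S (E\<inverse>)"
  using finite_S E_subset E_irrefl by unfold_locales auto

lemma GR_minus_iff_bounded_in_degree:
  "(\<forall>t\<in>tp ` E. \<forall>a\<in>S. GR_minus t a) \<longleftrightarrow> (\<exists>B. \<forall>m\<ge>1. \<forall>w\<in>words S m. card (in_nbrs m w) \<le> B)"
proof -
  interpret converse: replacement_graphs S "E\<inverse>" "tp \<circ> prod.swap" "\<lambda>t. (I t)\<inverse>"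
    by (rule replacement_graphs_converse)
  have "converse.GR_plus = GR_minus"
    by (simp add: fun_eq_iff converse.GR_plus_def GR_minus_def b_plus_def b_minus_def
        deg_plus_def deg_minus_def)
  moreover have "converse.out_nbrs = in_nbrs"
    by (simp add: fun_eq_iff converse.out_nbrs_def in_nbrs_def rep_edges_converse)
  moreover have "(tp \<circ> prod.swap) ` E\<inverse> = tp ` E"
    by (force simp: image_iff)
  ultimately show ?thesis
    using converse.GR_plus_iff_bounded_out_degree by simp
qed

lemma finite_in_nbrs: "finite (in_nbrs m w)"
  by (rule finite_subset[OF _ finite_words[OF finite_S, of m]])
    (auto simp: in_nbrs_def dest: rep_edges_in_words)

lemma rep_deg_eq_card_Un:
  "w \<in> words S m \<Longrightarrow> rep_deg S E tp I w = card (out_nbrs m w \<union> in_nbrs m w)"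
  by (simp add: rep_deg_def out_nbrs_def in_nbrs_def words_def Collect_disj_eq)

lemma bounded_degree_iff:
  "(\<exists>B. \<forall>m\<ge>1. \<forall>w\<in>words S m. rep_deg S E tp I w \<le> B) \<longleftrightarrow>
    (\<exists>B. \<forall>m\<ge>1. \<forall>w\<in>words S m. card (out_nbrs m w) \<le> B) \<and>
    (\<exists>B. \<forall>m\<ge>1. \<forall>w\<in>words S m. card (in_nbrs m w) \<le> B)"
proof safe
  fix B
  assume B: "\<forall>m\<ge>1. \<forall>w\<in>words S m. rep_deg S E tp I w \<le> B"
  have "card (out_nbrs m w) \<le> B \<and> card (in_nbrs m w) \<le> B" if "m \<ge> 1" "w \<in> words S m" for m w
  proof -
    have "card (out_nbrs m w) \<le> rep_deg S E tp I w" "card (in_nbrs m w) \<le> rep_deg S E tp I w"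
      unfolding rep_deg_eq_card_Un[OF that(2)] using finite_out_nbrs finite_in_nbrs
      by (simp_all add: card_mono)
    then show ?thesis using B that by fastforce
  qed
  then show "\<exists>B. \<forall>m\<ge>1. \<forall>w\<in>words S m. card (out_nbrs m w) \<le> B"
    and "\<exists>B. \<forall>m\<ge>1. \<forall>w\<in>words S m. card (in_nbrs m w) \<le> B"
    by blast+
next
  fix B1 B2
  assume B1: "\<forall>m\<ge>1. \<forall>w\<in>words S m. card (out_nbrs m w) \<le> B1"
    and B2: "\<forall>m\<ge>1. \<forall>w\<in>words S m. card (in_nbrs m w) \<le> B2"
  have "rep_deg S E tp I w \<le> B1 + B2" if "m \<ge> 1" "w \<in> words S m" for m w
  proof -
    have "rep_deg S E tp I w \<le> card (out_nbrs m w) + card (in_nbrs m w)"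
      unfolding rep_deg_eq_card_Un[OF that(2)] by (rule card_Un_le)
    also have "\<dots> \<le> B1 + B2" using B1 B2 that by (simp add: add_mono)
    finally show ?thesis .
  qed
  then show "\<exists>B. \<forall>m\<ge>1. \<forall>w\<in>words S m. rep_deg S E tp I w \<le> B" by blast
qed

end

lemma IGS_replacement_graphs: "IGS S E T tp I \<Longrightarrow> replacement_graphs S E"
  unfolding IGS_def replacement_graphs_def by blast

theorem lemma3p5:
  fixes S :: "'a set" and E :: "('a \<times> 'a) set" and T :: "'b set"
    and tp :: "'a \<times> 'a \<Rightarrow> 'b" and I :: "'b \<Rightarrow> ('a \<times> 'a) set"
  assumes "IGS S E T tp I"
  shows "(GR1 S T I \<and> GR2 S E T tp I) \<longleftrightarrow>
         (\<exists>B::nat. \<forall>m\<ge>1. \<forall>w\<in>words S m. rep_deg S E tp I w \<le> B)"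
proof -
  interpret replacement_graphs S E tp I
    using assms by (rule IGS_replacement_graphs)
  have "T = tp ` E"
    using assms by (simp add: IGS_def)
  then show ?thesis
    by (simp only: GR1_GR2_iff GR_plus_iff_bounded_out_degree GR_minus_iff_bounded_in_degree
        bounded_degree_iff)
qed

end
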